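(* Let $\beta>1$, $I_L=\bigcup_{k\in\mathbb{N}}(2k+1,2k+2)$, $I_D=\bigcup_{k\in\mathbb{N}}(2k,2k+1)$. Then: (i) $l_t(t,\beta)=\sqrt{1-\hat\sigma^2(t,\beta)}-1$ for every $t\in I_L$; (ii) $l_t(t,\beta)=\sqrt{\beta^2-\hat\sigma^2(t,\beta)}-1$ for every $t\in I_D$; (iii) $l(\cdot,\beta)$ is strictly convex on each of the open intervals composing $I_L\cup I_D$; (iv) $l(\cdot,\beta)$ is strictly decreasing on each of the open intervals composing $I_L$; (v) if $\beta\ge\sqrt{3/2}$, then $l(\cdot,\beta)$ is strictly increasing on each of the open intervals composing $I_D$; (vi) if $1<\beta<\sqrt{3/2}$, then there exists a unique $t_0>0$, characterized by $\hat\sigma(t_0,\beta)=\sqrt{\beta^2-1}$, such that $l_t(t,\beta)<0$ for all $t\in[0,t_0)\cap I_D$ and $l_t(t,\beta)>0$ for all $t\in(t_0,+\infty)\cap I_D$.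
   Context: $\mathbb{N}=\{0,1,2,\dots\}$. For $t\ge 0$ let $q(t)=\lfloor t+1\rfloor/2$ if $\lfloor t\rfloor$ is odd and $q(t)=t-\lfloor t\rfloor/2$ if $\lfloor t\rfloor$ is even, and $p(t)=t+1-q(t)$. For $\beta\ge1$ let $\hat\sigma(t,\beta)\in(0,1)$ be the unique solution $\sigma$ of $\frac{p(t)\sigma}{\sqrt{1-\sigma^2}}+\frac{q(t)\sigma}{\sqrt{\beta^2-\sigma^2}}=1$. The normalized length is $l(t,\beta)=\frac{p(t)}{\sqrt{1-\hat\sigma^2}}+\frac{\beta^2q(t)}{\sqrt{\beta^2-\hat\sigma^2}}-t-\sqrt2$, $\hat\sigma=\hat\sigma(t,\beta)$; $l_t$ denotes its partial derivative in $t$. *)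

theory Defs
  imports "HOL-Analysis.Analysis"
begin

definition qf :: "real \<Rightarrow> real" where
  "qf t = (if odd \<lfloor>t\<rfloor> then real_of_int \<lfloor>t + 1\<rfloor> / 2
           else t - real_of_int \<lfloor>t\<rfloor> / 2)"

definition pf :: "real \<Rightarrow> real" where
  "pf t = t + 1 - qf t"

definition sigma_hat :: "real \<Rightarrow> real \<Rightarrow> real" where
  "sigma_hat t \<beta> = (THE \<sigma>. 0 < \<sigma> \<and> \<sigma> < 1 \<and>
      pf t * \<sigma> / sqrt (1 - \<sigma>\<^sup>2) + qf t * \<sigma> / sqrt (\<beta>\<^sup>2 - \<sigma>\<^sup>2) = 1)"

definition len :: "real \<Rightarrow> real \<Rightarrow> real" where
  "len t \<beta> = pf t / sqrt (1 - (sigma_hat t \<beta>)\<^sup>2)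
      + \<beta>\<^sup>2 * qf t / sqrt (\<beta>\<^sup>2 - (sigma_hat t \<beta>)\<^sup>2) - t - sqrt 2"

definition I_L :: "real set" where
  "I_L = (\<Union>k::nat. {real (2*k+1) <..< real (2*k+2)})"

definition I_D :: "real set" where
  "I_D = (\<Union>k::nat. {real (2*k) <..< real (2*k+1)})"

definition strict_convex_on :: "real set \<Rightarrow> (real \<Rightarrow> real) \<Rightarrow> bool" where
  "strict_convex_on S f \<longleftrightarrow> (\<forall>x\<in>S. \<forall>y\<in>S. \<forall>u. x \<noteq> y \<and> 0 < u \<and> u < 1 \<longrightarrow>
      f (u * x + (1 - u) * y) < u * f x + (1 - u) * f y)"

end

theory Submission
  imports Defs
begin

(* On each interval between consecutive integers, p and q are affine in t with slopes (1,0)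
   or (0,1); both are nondecreasing and p + q = t + 1. The left-hand side of the equation
   defining sigma_hat increases strictly in sigma and in (p, q), so sigma_hat is well defined,
   continuous and strictly decreasing in t, with sigma_hat 0 = sqrt (1/2).
   By Cauchy-Schwarz, p / sqrt (1 - s^2) + beta^2 q / sqrt (beta^2 - s^2) at s = sigma_hat is
   the maximum over sigma of p sqrt (1 - sigma^2) + q sqrt (beta^2 - sigma^2) + sigma, which is
   affine in (p, q); this envelope yields the derivatives (i) and (ii). As sigma_hat decreases,
   both derivatives increase, giving (iii). The derivative on I_L is negative; the one on I_D
   exceeds sqrt (beta^2 - 1/2) - 1 >= 0 when beta^2 >= 3/2, and otherwise changes sign exactly
   where sigma_hat^2 = beta^2 - 1 < 1/2, a value sigma_hat attains by the intermediate value
   theorem. *)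

lemma ratio_sqrt_strict_mono:
  fixes x y a :: real
  assumes "0 \<le> x" "x < y" "y\<^sup>2 < a"
  shows "x / sqrt (a - x\<^sup>2) < y / sqrt (a - y\<^sup>2)"
proof -
  have "x\<^sup>2 < y\<^sup>2" using assms by (simp add: power_strict_mono)
  then have "x / sqrt (a - x\<^sup>2) \<le> x / sqrt (a - y\<^sup>2)"
    using assms by (simp add: frac_le)
  also have "\<dots> < y / sqrt (a - y\<^sup>2)"
    using assms by (simp add: divide_strict_right_mono)
  finally show ?thesis .
qed

lemma ratio_sqrt_mono:
  fixes x y a :: real
  assumes "0 \<le> x" "x \<le> y" "y\<^sup>2 < a"
  shows "x / sqrt (a - x\<^sup>2) \<le> y / sqrt (a - y\<^sup>2)"
  using ratio_sqrt_strict_mono[OF assms(1) _ assms(3)] assms(2) by (cases "x = y") auto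

lemma square_less_square_of_less_one:
  fixes x \<beta> :: real
  assumes "0 \<le> x" "x < 1" "1 \<le> \<beta>"
  shows "x\<^sup>2 < 1" "x\<^sup>2 < \<beta>\<^sup>2"
  using assms by (simp_all add: abs_square_less_1 power_strict_mono)

lemma sqrt_diff_mult_add_le:
  fixes a s \<sigma> :: real
  assumes "\<sigma>\<^sup>2 \<le> a" "s\<^sup>2 \<le> a"
  shows "sqrt (a - \<sigma>\<^sup>2) * sqrt (a - s\<^sup>2) + \<sigma> * s \<le> a"
proof -
  define X where "X = sqrt (a - \<sigma>\<^sup>2)"
  define Y where "Y = sqrt (a - s\<^sup>2)"
  have "X\<^sup>2 = a - \<sigma>\<^sup>2" "Y\<^sup>2 = a - s\<^sup>2" unfolding X_def Y_def using assms by simp_all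
  moreover have "0 \<le> (X - Y)\<^sup>2 + (\<sigma> - s)\<^sup>2" by simp
  ultimately show ?thesis unfolding X_def[symmetric] Y_def[symmetric]
    by (simp add: power2_diff algebra_simps)
qed

lemma sqrt_diff_add_ratio_le:
  fixes a s \<sigma> :: real
  assumes "\<sigma>\<^sup>2 \<le> a" "s\<^sup>2 < a"
  shows "sqrt (a - \<sigma>\<^sup>2) + \<sigma> * (s / sqrt (a - s\<^sup>2)) \<le> a / sqrt (a - s\<^sup>2)"
proof -
  have Y: "0 < sqrt (a - s\<^sup>2)" using assms by simp
  then have "(sqrt (a - \<sigma>\<^sup>2) + \<sigma> * (s / sqrt (a - s\<^sup>2))) * sqrt (a - s\<^sup>2)
      = sqrt (a - \<sigma>\<^sup>2) * sqrt (a - s\<^sup>2) + \<sigma> * s" by (simp add: field_simps)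
  also have "\<dots> \<le> a" using sqrt_diff_mult_add_le assms by simp
  finally show ?thesis using Y by (simp add: pos_le_divide_eq)
qed

lemma sqrt_diff_add_ratio_eq:
  fixes a s :: real
  assumes "s\<^sup>2 < a"
  shows "sqrt (a - s\<^sup>2) + s * (s / sqrt (a - s\<^sup>2)) = a / sqrt (a - s\<^sup>2)"
proof -
  have "(sqrt (a - s\<^sup>2))\<^sup>2 = a - s\<^sup>2" "0 < sqrt (a - s\<^sup>2)" using assms by simp_all
  then show ?thesis by (simp add: field_simps power2_eq_square)
qed

lemma DERIV_sandwich:
  fixes M g :: "real \<Rightarrow> real"
  assumes "open J" "t \<in> J" "isCont g t"
    and bounds: "\<And>u. u \<in> J \<Longrightarrow> (u - t) * g t \<le> M u - M t \<and> M u - M t \<le> (u - t) * g u"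
  shows "(M has_real_derivative g t) (at t)"
proof -
  have "\<forall>\<^sub>F u in at t. norm ((M u - M t) / (u - t) - g t) \<le> \<bar>g u - g t\<bar>"
    using eventually_at_in_open[OF assms(1,2)]
  proof eventually_elim
    case (elim u)
    then have "u - t \<noteq> 0" by simp
    then have "(u - t) * ((M u - M t) / (u - t) - g t) = (M u - M t) - (u - t) * g t"
      by (simp add: field_simps)
    then have "0 \<le> (u - t) * ((M u - M t) / (u - t) - g t)"
      "(u - t) * ((M u - M t) / (u - t) - g t) \<le> (u - t) * (g u - g t)"
      using bounds[of u] elim by (simp_all add: right_diff_distrib)
    then have "\<bar>u - t\<bar> * \<bar>(M u - M t) / (u - t) - g t\<bar> \<le> \<bar>u - t\<bar> * \<bar>g u - g t\<bar>"
      by (simp flip: abs_mult)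
    then show ?case using \<open>u - t \<noteq> 0\<close> by simp
  qed
  moreover have "((\<lambda>u. \<bar>g u - g t\<bar>) \<longlongrightarrow> 0) (at t)"
    using assms(3) by (simp add: isCont_def LIM_zero tendsto_rabs_zero)
  ultimately show ?thesis
    unfolding has_field_derivative_iff by (subst LIM_zero_iff[symmetric]) (rule Lim_null_comparison)
qed

lemma strict_convex_onI_deriv:
  fixes f f' :: "real \<Rightarrow> real"
  assumes der: "\<And>x. x \<in> {a<..<b} \<Longrightarrow> (f has_real_derivative f' x) (at x)"
    and mono: "\<And>x y. x \<in> {a<..<b} \<Longrightarrow> y \<in> {a<..<b} \<Longrightarrow> x < y \<Longrightarrow> f' x < f' y"
  shows "strict_convex_on {a<..<b} f"
proof -
  have less: "f (u * x + (1 - u) * y) < u * f x + (1 - u) * f y"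
    if xy: "x \<in> {a<..<b}" "y \<in> {a<..<b}" "x < y" and u: "0 < u" "u < 1" for x y u
  proof -
    define z where "z = u * x + (1 - u) * y"
    have zx: "z - x = (1 - u) * (y - x)" and yz: "y - z = u * (y - x)"
      unfolding z_def by (simp_all add: algebra_simps)
    have "0 < (1 - u) * (y - x)" "0 < u * (y - x)" using xy u by simp_all
    then have "x < z" "z < y" unfolding zx[symmetric] yz[symmetric] by simp_all
    have der_xy: "(f has_real_derivative f' w) (at w)" if "x \<le> w" "w \<le> y" for w
      using der xy that by simp
    have "\<exists>\<xi>. x < \<xi> \<and> \<xi> < z \<and> f z - f x = (z - x) * f' \<xi>"
      by (rule MVT2[OF \<open>x < z\<close>]) (use der_xy \<open>z < y\<close> in auto)
    then obtain \<xi> where \<xi>: "x < \<xi>" "\<xi> < z" "f z - f x = (z - x) * f' \<xi>" by blast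
    have "\<exists>\<eta>. z < \<eta> \<and> \<eta> < y \<and> f y - f z = (y - z) * f' \<eta>"
      by (rule MVT2[OF \<open>z < y\<close>]) (use der_xy \<open>x < z\<close> in auto)
    then obtain \<eta> where \<eta>: "z < \<eta>" "\<eta> < y" "f y - f z = (y - z) * f' \<eta>" by blast
    have "f' \<xi> < f' \<eta>" using mono[of \<xi> \<eta>] \<xi> \<eta> xy by auto
    have fx: "f x = f z - (z - x) * f' \<xi>" and fy: "f y = f z + (y - z) * f' \<eta>"
      using \<xi>(3) \<eta>(3) by simp_all
    have "u * f x + (1 - u) * f y - f z = u * (1 - u) * (y - x) * (f' \<eta> - f' \<xi>)"
      unfolding fx fy zx yz by (simp add: algebra_simps)
    also have "\<dots> > 0" using u xy \<open>f' \<xi> < f' \<eta>\<close> by simp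
    finally show ?thesis unfolding z_def by simp
  qed
  show ?thesis unfolding strict_convex_on_def
  proof (intro ballI allI impI)
    fix x y u :: real assume "x \<in> {a<..<b}" "y \<in> {a<..<b}" "x \<noteq> y \<and> 0 < u \<and> u < 1"
    then show "f (u * x + (1 - u) * y) < u * f x + (1 - u) * f y"
      using less[of x y u] less[of y x "1 - u"] by (cases "x < y") (auto simp: algebra_simps)
  qed
qed

lemma strict_mono_onI_deriv_pos:
  fixes f f' :: "real \<Rightarrow> real"
  assumes "\<And>x. x \<in> {a<..<b} \<Longrightarrow> (f has_real_derivative f' x) (at x) \<and> 0 < f' x"
  shows "strict_mono_on {a<..<b} f"
proof (rule strict_mono_onI)
  fix x y assume "x \<in> {a<..<b}" "y \<in> {a<..<b}" "x < y"
  then show "f x < f y"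
    using DERIV_pos_imp_increasing[OF \<open>x < y\<close>, of f] assms by (meson greaterThanLessThan_iff le_less_trans less_le_trans)
qed

lemma strict_antimono_onI_deriv_neg:
  fixes f f' :: "real \<Rightarrow> real"
  assumes "\<And>x. x \<in> {a<..<b} \<Longrightarrow> (f has_real_derivative f' x) (at x) \<and> f' x < 0"
  shows "strict_antimono_on {a<..<b} f"
proof (rule monotone_onI)
  fix x y assume "x \<in> {a<..<b}" "y \<in> {a<..<b}" "x < y"
  then show "f x > f y"
    using DERIV_neg_imp_decreasing[OF \<open>x < y\<close>, of f] assms by (meson greaterThanLessThan_iff le_less_trans less_le_trans)
qed

lemma qf_pf_floor_bounds:
  fixes t :: real
  defines "n \<equiv> \<lfloor>t\<rfloor>"
  shows "of_int ((n + 1) div 2) \<le> qf t" "qf t \<le> of_int ((n + 2) div 2)"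
    and "of_int (n div 2 + 1) \<le> pf t" "pf t \<le> of_int ((n + 1) div 2 + 1)"
proof -
  have t: "of_int n \<le> t" "t < of_int n + 1" unfolding n_def by linarith+
  consider k where "n = 2 * k" | k where "n = 2 * k + 1" by (metis oddE evenE)
  then have "of_int ((n + 1) div 2) \<le> qf t \<and> qf t \<le> of_int ((n + 2) div 2) \<and>
    of_int (n div 2 + 1) \<le> pf t \<and> pf t \<le> of_int ((n + 1) div 2 + 1)"
  proof cases
    case 1
    then have "(n + 1) div 2 = k" "(n + 2) div 2 = k + 1" "n div 2 = k" by presburger+
    with 1 t show ?thesis by (simp add: qf_def pf_def n_def[symmetric])
  next
    case 2
    then have "(n + 1) div 2 = k + 1" "(n + 2) div 2 = k + 1" "n div 2 = k" by presburger+
    with 2 t show ?thesis by (simp add: qf_def pf_def n_def[symmetric] field_simps)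
  qed
  then show "of_int ((n + 1) div 2) \<le> qf t" "qf t \<le> of_int ((n + 2) div 2)"
    "of_int (n div 2 + 1) \<le> pf t" "pf t \<le> of_int ((n + 1) div 2 + 1)" by auto
qed

lemma qf_pf_mono:
  fixes s t :: real
  assumes "s \<le> t"
  shows "qf s \<le> qf t \<and> pf s \<le> pf t"
proof (cases "\<lfloor>s\<rfloor> = \<lfloor>t\<rfloor>")
  case True
  with assms show ?thesis by (simp add: qf_def pf_def)
next
  case False
  then have "\<lfloor>s\<rfloor> + 1 \<le> \<lfloor>t\<rfloor>" using floor_mono[OF assms] by linarith
  then have "(\<lfloor>s\<rfloor> + 2) div 2 \<le> (\<lfloor>t\<rfloor> + 1) div 2" "(\<lfloor>s\<rfloor> + 1) div 2 \<le> \<lfloor>t\<rfloor> div 2"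
    by (simp_all add: zdiv_mono1)
  then show ?thesis
    using qf_pf_floor_bounds[of s] qf_pf_floor_bounds[of t]
    by (smt (verit) of_int_le_iff)
qed

lemma pf_plus_qf: "pf t + qf t = t + 1"
  by (simp add: pf_def)

lemma qf_pf_nonneg:
  assumes "0 \<le> t"
  shows "0 \<le> qf t" "1 \<le> pf t"
  using qf_pf_mono[OF assms] by (simp_all add: qf_def pf_def)

lemma lipschitz_qf: "1-lipschitz_on UNIV qf"
proof (rule lipschitz_onI)
  fix s t :: real
  have "\<bar>qf s - qf t\<bar> \<le> \<bar>s - t\<bar>"
    using qf_pf_mono[of s t] qf_pf_mono[of t s] pf_plus_qf[of s] pf_plus_qf[of t]
    by (cases "s \<le> t") auto
  then show "dist (qf s) (qf t) \<le> 1 * dist s t" by (simp add: dist_real_def)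
qed simp

lemma continuous_on_qf: "continuous_on UNIV qf"
  by (rule lipschitz_on_continuous_on[OF lipschitz_qf])

lemma pf_qf_on_D:
  assumes "t \<in> {real (2*k) <..< real (2*k+1)}"
  shows "pf t = real k + 1" "qf t = t - real k"
proof -
  have "\<lfloor>t\<rfloor> = 2 * int k" using assms by (simp add: floor_eq_iff)
  then show "pf t = real k + 1" "qf t = t - real k" by (simp_all add: qf_def pf_def)
qed

lemma pf_qf_on_L:
  assumes "t \<in> {real (2*k+1) <..< real (2*k+2)}"
  shows "pf t = t - real k" "qf t = real k + 1"
proof -
  have "\<lfloor>t\<rfloor> = 2 * int k + 1" using assms by (simp add: floor_eq_iff)
  then show "pf t = t - real k" "qf t = real k + 1" by (simp_all add: qf_def pf_def field_simps)
qed

definition snell :: "real \<Rightarrow> real \<Rightarrow> real \<Rightarrow> real \<Rightarrow> real" where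
  "snell \<beta> P Q \<sigma> = P * \<sigma> / sqrt (1 - \<sigma>\<^sup>2) + Q * \<sigma> / sqrt (\<beta>\<^sup>2 - \<sigma>\<^sup>2)"

lemma snell_eq: "snell \<beta> P Q \<sigma> = P * (\<sigma> / sqrt (1 - \<sigma>\<^sup>2)) + Q * (\<sigma> / sqrt (\<beta>\<^sup>2 - \<sigma>\<^sup>2))"
  by (simp add: snell_def)

lemma snell_strict_mono:
  assumes "1 \<le> \<beta>" "0 < P" "0 \<le> Q" "0 \<le> x" "x < y" "y < 1"
  shows "snell \<beta> P Q x < snell \<beta> P Q y"
proof -
  have y: "y\<^sup>2 < 1" "y\<^sup>2 < \<beta>\<^sup>2"
    using square_less_square_of_less_one[of y \<beta>] assms by auto
  have "P * (x / sqrt (1 - x\<^sup>2)) < P * (y / sqrt (1 - y\<^sup>2))"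
    using ratio_sqrt_strict_mono[of x y 1] y assms by (intro mult_strict_left_mono) auto
  moreover have "Q * (x / sqrt (\<beta>\<^sup>2 - x\<^sup>2)) \<le> Q * (y / sqrt (\<beta>\<^sup>2 - y\<^sup>2))"
    using ratio_sqrt_mono[of x y "\<beta>\<^sup>2"] y assms by (intro mult_left_mono) auto
  ultimately show ?thesis unfolding snell_eq by simp
qed

lemma snell_strict_mono_weights:
  assumes "1 \<le> \<beta>" "0 < \<sigma>" "\<sigma> < 1" "P \<le> P'" "Q \<le> Q'" "P + Q < P' + Q'"
  shows "snell \<beta> P Q \<sigma> < snell \<beta> P' Q' \<sigma>"
proof -
  define a where "a = \<sigma> / sqrt (1 - \<sigma>\<^sup>2)"
  define b where "b = \<sigma> / sqrt (\<beta>\<^sup>2 - \<sigma>\<^sup>2)"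
  have "0 < a" "0 < b"
    using square_less_square_of_less_one[of \<sigma> \<beta>] assms unfolding a_def b_def by auto
  then have "P * a + Q * b < P' * a + Q' * b"
    using assms by (smt (verit) mult_right_mono mult_strict_right_mono)
  then show ?thesis unfolding snell_eq a_def b_def .
qed

lemma continuous_on_snell_pf_qf: "continuous_on UNIV (\<lambda>t. snell \<beta> (pf t) (qf t) \<sigma>)"
  unfolding snell_eq pf_def using continuous_on_qf by (intro continuous_intros)

lemma snell_exists_root:
  assumes "1 \<le> \<beta>" "1 \<le> P" "0 \<le> Q"
  shows "\<exists>\<sigma>. 0 < \<sigma> \<and> \<sigma> < 1 \<and> snell \<beta> P Q \<sigma> = 1"
proof -
  have cont: "continuous_on {0..4/5} (snell \<beta> P Q)"
    unfolding snell_def using square_less_square_of_less_one[of _ \<beta>] assms(1)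
    by (intro continuous_intros) (auto simp: less_le)
  have "1 - (4/5::real)\<^sup>2 = (3/5)\<^sup>2" by (simp add: power2_eq_square)
  then have "sqrt (1 - (4/5::real)\<^sup>2) = 3/5" by simp
  then have "P * (4/5) / sqrt (1 - (4/5)\<^sup>2) = 4/3 * P" by (simp only:) simp
  moreover have "0 \<le> Q * (4/5) / sqrt (\<beta>\<^sup>2 - (4/5)\<^sup>2)" using assms by simp
  ultimately have "1 \<le> snell \<beta> P Q (4/5)"
    using assms unfolding snell_def by linarith
  then obtain \<sigma> where "0 \<le> \<sigma>" "\<sigma> \<le> 4/5" "snell \<beta> P Q \<sigma> = 1"
    using IVT'[of "snell \<beta> P Q" 0 1 "4/5"] cont by (auto simp: snell_def)
  moreover have "\<sigma> \<noteq> 0" using \<open>snell \<beta> P Q \<sigma> = 1\<close> by (auto simp: snell_def)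
  ultimately show ?thesis by (intro exI[of _ \<sigma>]) auto
qed

lemma sigma_hat_ex1:
  assumes "1 \<le> \<beta>" "0 \<le> t"
  shows "\<exists>!\<sigma>. 0 < \<sigma> \<and> \<sigma> < 1 \<and> snell \<beta> (pf t) (qf t) \<sigma> = 1"
proof (rule ex_ex1I)
  show "\<exists>\<sigma>. 0 < \<sigma> \<and> \<sigma> < 1 \<and> snell \<beta> (pf t) (qf t) \<sigma> = 1"
    using snell_exists_root qf_pf_nonneg assms by blast
next
  fix x y assume "0 < x \<and> x < 1 \<and> snell \<beta> (pf t) (qf t) x = 1"
    "0 < y \<and> y < 1 \<and> snell \<beta> (pf t) (qf t) y = 1"
  then show "x = y"
    using snell_strict_mono[of \<beta> "pf t" "qf t" x y] snell_strict_mono[of \<beta> "pf t" "qf t" y x]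
      qf_pf_nonneg[OF assms(2)] assms(1)
    by (cases x y rule: linorder_cases) auto
qed

lemma sigma_hat_eq_The: "sigma_hat t \<beta> = (THE \<sigma>. 0 < \<sigma> \<and> \<sigma> < 1 \<and> snell \<beta> (pf t) (qf t) \<sigma> = 1)"
  unfolding sigma_hat_def snell_def ..

lemma sigma_hat:
  assumes "1 \<le> \<beta>" "0 \<le> t"
  shows "0 < sigma_hat t \<beta>" "sigma_hat t \<beta> < 1" "snell \<beta> (pf t) (qf t) (sigma_hat t \<beta>) = 1"
  using theI'[OF sigma_hat_ex1[OF assms]] unfolding sigma_hat_eq_The by auto

lemma sigma_hat_eqI:
  assumes "1 \<le> \<beta>" "0 \<le> t" "0 < \<sigma>" "\<sigma> < 1" "snell \<beta> (pf t) (qf t) \<sigma> = 1"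
  shows "sigma_hat t \<beta> = \<sigma>"
  unfolding sigma_hat_eq_The using the1_equality[OF sigma_hat_ex1[OF assms(1,2)]] assms(3-5) by blast

lemma less_sigma_hat_iff:
  assumes "1 \<le> \<beta>" "0 \<le> t" "0 < \<sigma>" "\<sigma> < 1"
  shows "\<sigma> < sigma_hat t \<beta> \<longleftrightarrow> snell \<beta> (pf t) (qf t) \<sigma> < 1"
  using sigma_hat[OF assms(1,2)] qf_pf_nonneg[OF assms(2)] assms
    snell_strict_mono[of \<beta> "pf t" "qf t" \<sigma> "sigma_hat t \<beta>"]
    snell_strict_mono[of \<beta> "pf t" "qf t" "sigma_hat t \<beta>" \<sigma>]
  by (cases \<sigma> "sigma_hat t \<beta>" rule: linorder_cases) auto

lemma sigma_hat_less_iff: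
  assumes "1 \<le> \<beta>" "0 \<le> t" "0 < \<sigma>" "\<sigma> < 1"
  shows "sigma_hat t \<beta> < \<sigma> \<longleftrightarrow> 1 < snell \<beta> (pf t) (qf t) \<sigma>"
  using sigma_hat[OF assms(1,2)] qf_pf_nonneg[OF assms(2)] assms
    snell_strict_mono[of \<beta> "pf t" "qf t" \<sigma> "sigma_hat t \<beta>"]
    snell_strict_mono[of \<beta> "pf t" "qf t" "sigma_hat t \<beta>" \<sigma>]
  by (cases \<sigma> "sigma_hat t \<beta>" rule: linorder_cases) auto

lemma sigma_hat_strict_antimono:
  assumes "1 \<le> \<beta>" "0 \<le> s" "s < t"
  shows "sigma_hat t \<beta> < sigma_hat s \<beta>"
proof -
  note S = sigma_hat[OF assms(1,2)]
  have "pf s \<le> pf t" "qf s \<le> qf t" using qf_pf_mono[of s t] assms by auto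
  moreover have "pf s + qf s < pf t + qf t" using assms by (simp add: pf_plus_qf)
  ultimately have "1 < snell \<beta> (pf t) (qf t) (sigma_hat s \<beta>)"
    using snell_strict_mono_weights[OF assms(1) S(1,2), where P = "pf s" and Q = "qf s"] S(3)
    by simp
  then show ?thesis using sigma_hat_less_iff[OF assms(1) _ S(1,2), of t] assms by simp
qed

lemma sigma_hat_0:
  assumes "1 \<le> \<beta>"
  shows "sigma_hat 0 \<beta> = sqrt (1/2)"
proof (rule sigma_hat_eqI[OF assms order_refl])
  have "sqrt (1 - (sqrt (1/2))\<^sup>2) = sqrt (1/2)" by simp
  then show "snell \<beta> (pf 0) (qf 0) (sqrt (1/2)) = 1"
    by (simp add: snell_def pf_def qf_def)
qed (simp_all add: real_sqrt_lt_1_iff)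

lemma sigma_hat_square_less_half:
  assumes "1 \<le> \<beta>" "0 < t"
  shows "(sigma_hat t \<beta>)\<^sup>2 < 1/2"
proof -
  have "sigma_hat t \<beta> < sqrt (1/2)"
    using sigma_hat_strict_antimono[OF assms(1) order_refl assms(2)] sigma_hat_0[OF assms(1)] by simp
  then have "(sigma_hat t \<beta>)\<^sup>2 < (sqrt (1/2))\<^sup>2"
    using sigma_hat(1)[OF assms(1), of t] assms by (intro power_strict_mono) auto
  then show ?thesis by simp
qed

lemma isCont_sigma_hat:
  assumes "1 \<le> \<beta>" "0 < t"
  shows "isCont (\<lambda>u. sigma_hat u \<beta>) t"
proof -
  note T = sigma_hat[OF assms(1) less_imp_le[OF assms(2)]]
  have snell_tendsto: "((\<lambda>u. snell \<beta> (pf u) (qf u) \<sigma>) \<longlongrightarrow> snell \<beta> (pf t) (qf t) \<sigma>) (at t)" for \<sigma>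
    using continuous_on_snell_pf_qf by (simp add: continuous_on_def)
  have pos: "\<forall>\<^sub>F u in at t. 0 \<le> u"
    using order_tendstoD(1)[OF tendsto_ident_at assms(2)] by (rule eventually_mono) simp
  show ?thesis unfolding isCont_def
  proof (rule order_tendstoI)
    fix a assume "a < sigma_hat t \<beta>"
    define \<sigma> where "\<sigma> = max a (sigma_hat t \<beta> / 2)"
    have \<sigma>: "0 < \<sigma>" "\<sigma> < sigma_hat t \<beta>" "a \<le> \<sigma>" "\<sigma> < 1"
      unfolding \<sigma>_def using \<open>a < sigma_hat t \<beta>\<close> T by auto
    then have "snell \<beta> (pf t) (qf t) \<sigma> < 1"
      using less_sigma_hat_iff[OF assms(1) _ \<sigma>(1,4), of t] assms by simp
    from order_tendstoD(2)[OF snell_tendsto this] pos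
    show "\<forall>\<^sub>F u in at t. a < sigma_hat u \<beta>"
      by eventually_elim (use less_sigma_hat_iff[OF assms(1) _ \<sigma>(1,4)] \<sigma>(3) in fastforce)
  next
    fix a assume "sigma_hat t \<beta> < a"
    define \<sigma> where "\<sigma> = min a ((1 + sigma_hat t \<beta>) / 2)"
    have \<sigma>: "0 < \<sigma>" "sigma_hat t \<beta> < \<sigma>" "\<sigma> \<le> a" "\<sigma> < 1"
      unfolding \<sigma>_def using \<open>sigma_hat t \<beta> < a\<close> T by (auto simp: min_def)
    then have "1 < snell \<beta> (pf t) (qf t) \<sigma>"
      using sigma_hat_less_iff[OF assms(1) _ \<sigma>(1,4), of t] assms by simp
    from order_tendstoD(1)[OF snell_tendsto this] pos
    show "\<forall>\<^sub>F u in at t. sigma_hat u \<beta> < a"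
      by eventually_elim (use sigma_hat_less_iff[OF assms(1) _ \<sigma>(1,4)] \<sigma>(3) in fastforce)
  qed
qed

lemma sigma_hat_attains:
  assumes "1 \<le> \<beta>" "0 < \<sigma>" "\<sigma> < sqrt (1/2)"
  shows "\<exists>t>0. sigma_hat t \<beta> = \<sigma>"
proof -
  have "sqrt (1/2) < (1::real)" by simp
  then have "\<sigma> < 1" using assms(3) by linarith
  then have snell0: "snell \<beta> (pf 0) (qf 0) \<sigma> < 1"
    using less_sigma_hat_iff[OF assms(1) order_refl assms(2)] sigma_hat_0[OF assms(1)] assms(3) by simp
  define m where "m = min (\<sigma> / sqrt (1 - \<sigma>\<^sup>2)) (\<sigma> / sqrt (\<beta>\<^sup>2 - \<sigma>\<^sup>2))"
  have "0 < m"
    using square_less_square_of_less_one[of \<sigma> \<beta>] assms \<open>\<sigma> < 1\<close> unfolding m_def by simp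
  define T where "T = 1 / m"
  have "0 \<le> T" unfolding T_def using \<open>0 < m\<close> by simp
  have "1 \<le> (T + 1) * m" unfolding T_def using \<open>0 < m\<close> by (simp add: field_simps)
  also have "\<dots> = pf T * m + qf T * m" by (simp add: pf_plus_qf flip: distrib_right)
  also have "\<dots> \<le> snell \<beta> (pf T) (qf T) \<sigma>"
    unfolding snell_eq m_def using qf_pf_nonneg[OF \<open>0 \<le> T\<close>]
    by (intro add_mono mult_left_mono) auto
  finally have "1 \<le> snell \<beta> (pf T) (qf T) \<sigma>" .
  then obtain t where t: "0 \<le> t" "t \<le> T" "snell \<beta> (pf t) (qf t) \<sigma> = 1"
    using IVT'[of "\<lambda>t. snell \<beta> (pf t) (qf t) \<sigma>" 0 1 T] snell0 \<open>0 \<le> T\<close>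
      continuous_on_subset[OF continuous_on_snell_pf_qf] by force
  then have "0 < t" using snell0 by (cases "t = 0") auto
  then show ?thesis using sigma_hat_eqI[OF assms(1) t(1) assms(2) \<open>\<sigma> < 1\<close> t(3)] by blast
qed

definition path_len :: "real \<Rightarrow> real \<Rightarrow> real \<Rightarrow> real \<Rightarrow> real" where
  "path_len \<beta> P Q \<sigma> = P / sqrt (1 - \<sigma>\<^sup>2) + \<beta>\<^sup>2 * Q / sqrt (\<beta>\<^sup>2 - \<sigma>\<^sup>2)"

definition dual_len :: "real \<Rightarrow> real \<Rightarrow> real \<Rightarrow> real \<Rightarrow> real" where
  "dual_len \<beta> P Q \<sigma> = P * sqrt (1 - \<sigma>\<^sup>2) + Q * sqrt (\<beta>\<^sup>2 - \<sigma>\<^sup>2) + \<sigma>"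

lemma len_eq_path_len: "len t \<beta> = path_len \<beta> (pf t) (qf t) (sigma_hat t \<beta>) - t - sqrt 2"
  unfolding len_def path_len_def ..

lemma dual_len_expand:
  assumes "snell \<beta> P Q s = 1"
  shows "dual_len \<beta> P Q \<sigma> = P * (sqrt (1 - \<sigma>\<^sup>2) + \<sigma> * (s / sqrt (1 - s\<^sup>2)))
      + Q * (sqrt (\<beta>\<^sup>2 - \<sigma>\<^sup>2) + \<sigma> * (s / sqrt (\<beta>\<^sup>2 - s\<^sup>2)))"
proof -
  have "\<sigma> = \<sigma> * snell \<beta> P Q s" using assms by simp
  then show ?thesis unfolding dual_len_def snell_eq by (simp add: algebra_simps)
qed

lemma dual_len_le_path_len:
  assumes "1 \<le> \<beta>" "0 \<le> P" "0 \<le> Q" "0 \<le> s" "s < 1" "snell \<beta> P Q s = 1" "\<sigma>\<^sup>2 \<le> 1"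
  shows "dual_len \<beta> P Q \<sigma> \<le> path_len \<beta> P Q s"
proof -
  note s = square_less_square_of_less_one[OF assms(4,5,1)]
  have "1 \<le> \<beta>\<^sup>2" using assms(1) by simp
  then have "\<sigma>\<^sup>2 \<le> \<beta>\<^sup>2" using assms(7) by linarith
  then have "P * (sqrt (1 - \<sigma>\<^sup>2) + \<sigma> * (s / sqrt (1 - s\<^sup>2))) \<le> P * (1 / sqrt (1 - s\<^sup>2))"
      "Q * (sqrt (\<beta>\<^sup>2 - \<sigma>\<^sup>2) + \<sigma> * (s / sqrt (\<beta>\<^sup>2 - s\<^sup>2))) \<le> Q * (\<beta>\<^sup>2 / sqrt (\<beta>\<^sup>2 - s\<^sup>2))"
    using sqrt_diff_add_ratio_le s assms(2,3,7) by (intro mult_left_mono; simp)+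
  then show ?thesis unfolding dual_len_expand[OF assms(6)] path_len_def by (simp add: mult.commute)
qed

lemma dual_len_eq_path_len:
  assumes "1 \<le> \<beta>" "0 \<le> s" "s < 1" "snell \<beta> P Q s = 1"
  shows "dual_len \<beta> P Q s = path_len \<beta> P Q s"
  unfolding dual_len_expand[OF assms(4)] path_len_def
  using sqrt_diff_add_ratio_eq square_less_square_of_less_one[OF assms(2,3,1)]
  by (simp add: mult.commute)

lemma len_has_real_derivative_affine:
  assumes "1 \<le> \<beta>" "open J" "J \<subseteq> {0<..}" "t \<in> J"
    and affine: "\<And>u. u \<in> J \<Longrightarrow> pf u = pf t + c1 * (u - t) \<and> qf u = qf t + c2 * (u - t)"
  shows "((\<lambda>u. len u \<beta>) has_real_derivative
     c1 * sqrt (1 - (sigma_hat t \<beta>)\<^sup>2) + c2 * sqrt (\<beta>\<^sup>2 - (sigma_hat t \<beta>)\<^sup>2) - 1) (at t)"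
proof -
  define M where "M u = path_len \<beta> (pf u) (qf u) (sigma_hat u \<beta>)" for u
  define g where "g u = c1 * sqrt (1 - (sigma_hat u \<beta>)\<^sup>2) + c2 * sqrt (\<beta>\<^sup>2 - (sigma_hat u \<beta>)\<^sup>2)" for u
  have dual_len_affine: "dual_len \<beta> (pf u) (qf u) (sigma_hat v \<beta>)
      = dual_len \<beta> (pf t) (qf t) (sigma_hat v \<beta>) + (u - t) * g v" if "u \<in> J" for u v
  proof -
    have "pf u = pf t + c1 * (u - t)" "qf u = qf t + c2 * (u - t)" using affine[OF that] by auto
    then show ?thesis unfolding dual_len_def g_def by (simp only:) (simp add: algebra_simps)
  qed
  have M_ge: "dual_len \<beta> (pf u) (qf u) (sigma_hat v \<beta>) \<le> M u"
    and M_eq: "M u = dual_len \<beta> (pf u) (qf u) (sigma_hat u \<beta>)" if "u \<in> J" "v \<in> J" for u v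
  proof -
    have "0 \<le> u" "0 \<le> v" using that assms(3) by auto
    note S = sigma_hat[OF assms(1) \<open>0 \<le> u\<close>] and V = sigma_hat[OF assms(1) \<open>0 \<le> v\<close>]
    have "(sigma_hat v \<beta>)\<^sup>2 \<le> 1"
      using square_less_square_of_less_one[of "sigma_hat v \<beta>" \<beta>] V assms(1) by simp
    then show "dual_len \<beta> (pf u) (qf u) (sigma_hat v \<beta>) \<le> M u"
      unfolding M_def using dual_len_le_path_len[OF assms(1)] S qf_pf_nonneg[OF \<open>0 \<le> u\<close>] by simp
    show "M u = dual_len \<beta> (pf u) (qf u) (sigma_hat u \<beta>)"
      unfolding M_def using dual_len_eq_path_len[OF assms(1)] S by simp
  qed
  have "isCont g t"
    unfolding g_def using isCont_sigma_hat[OF assms(1)] assms(3,4)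
    by (intro continuous_intros) auto
  \<comment> \<open>M is a pointwise maximum of the affine functions u \<mapsto> dual_len at a fixed \<open>\<sigma>\<close>;
    evaluating at the maximizers \<open>\<sigma>\<close>-hat t and \<open>\<sigma>\<close>-hat u brackets the difference quotient.\<close>
  moreover have "(u - t) * g t \<le> M u - M t \<and> M u - M t \<le> (u - t) * g u" if "u \<in> J" for u
    using M_ge[OF that assms(4)] M_ge[OF assms(4) that] M_eq[OF that that] M_eq[OF assms(4,4)]
      dual_len_affine[OF that, of t] dual_len_affine[OF that, of u] by simp
  ultimately have "(M has_real_derivative g t) (at t)"
    by (rule DERIV_sandwich[OF assms(2,4)])
  moreover have "(\<lambda>u. len u \<beta>) = (\<lambda>u. M u - u - sqrt 2)"
    by (simp add: len_eq_path_len M_def)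
  ultimately show ?thesis
    unfolding g_def by (auto intro!: derivative_eq_intros)
qed

lemma len_has_real_derivative_on_D:
  assumes "1 \<le> \<beta>" "t \<in> {real (2*k) <..< real (2*k+1)}"
  shows "((\<lambda>u. len u \<beta>) has_real_derivative sqrt (\<beta>\<^sup>2 - (sigma_hat t \<beta>)\<^sup>2) - 1) (at t)"
  using len_has_real_derivative_affine[OF assms(1) open_greaterThanLessThan _ assms(2), of 0 1]
    pf_qf_on_D[OF assms(2)] pf_qf_on_D
  by fastforce

lemma len_has_real_derivative_on_L:
  assumes "1 \<le> \<beta>" "t \<in> {real (2*k+1) <..< real (2*k+2)}"
  shows "((\<lambda>u. len u \<beta>) has_real_derivative sqrt (1 - (sigma_hat t \<beta>)\<^sup>2) - 1) (at t)"
  using len_has_real_derivative_affine[OF assms(1) open_greaterThanLessThan _ assms(2), of 1 0]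
    pf_qf_on_L[OF assms(2)] pf_qf_on_L
  by fastforce

lemma strict_convex_on_len_D:
  assumes "1 \<le> \<beta>"
  shows "strict_convex_on {real (2*k) <..< real (2*k+1)} (\<lambda>t. len t \<beta>)"
proof (rule strict_convex_onI_deriv[OF len_has_real_derivative_on_D[OF assms]])
  fix x y assume "x \<in> {real (2*k) <..< real (2*k+1)}" "x < y"
  then have "0 \<le> x" "0 \<le> y" by simp_all
  then have "sigma_hat y \<beta> < sigma_hat x \<beta>" "0 < sigma_hat y \<beta>"
    using sigma_hat_strict_antimono[OF assms \<open>0 \<le> x\<close> \<open>x < y\<close>] sigma_hat(1)[OF assms \<open>0 \<le> y\<close>]
    by simp_all
  then show "sqrt (\<beta>\<^sup>2 - (sigma_hat x \<beta>)\<^sup>2) - 1 < sqrt (\<beta>\<^sup>2 - (sigma_hat y \<beta>)\<^sup>2) - 1"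
    by (simp add: power_strict_mono)
qed

lemma strict_convex_on_len_L:
  assumes "1 \<le> \<beta>"
  shows "strict_convex_on {real (2*k+1) <..< real (2*k+2)} (\<lambda>t. len t \<beta>)"
proof (rule strict_convex_onI_deriv[OF len_has_real_derivative_on_L[OF assms]])
  fix x y assume "x \<in> {real (2*k+1) <..< real (2*k+2)}" "x < y"
  then have "0 \<le> x" "0 \<le> y" by simp_all
  then have "sigma_hat y \<beta> < sigma_hat x \<beta>" "0 < sigma_hat y \<beta>"
    using sigma_hat_strict_antimono[OF assms \<open>0 \<le> x\<close> \<open>x < y\<close>] sigma_hat(1)[OF assms \<open>0 \<le> y\<close>]
    by simp_all
  then show "sqrt (1 - (sigma_hat x \<beta>)\<^sup>2) - 1 < sqrt (1 - (sigma_hat y \<beta>)\<^sup>2) - 1"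
    by (simp add: power_strict_mono)
qed

lemma strict_antimono_on_len_L:
  assumes "1 \<le> \<beta>"
  shows "strict_antimono_on {real (2*k+1) <..< real (2*k+2)} (\<lambda>t. len t \<beta>)"
proof (rule strict_antimono_onI_deriv_neg[OF conjI[OF len_has_real_derivative_on_L[OF assms]]])
  fix t assume "t \<in> {real (2*k+1) <..< real (2*k+2)}"
  then have "0 < sigma_hat t \<beta>" using sigma_hat(1)[OF assms, of t] by simp
  then show "sqrt (1 - (sigma_hat t \<beta>)\<^sup>2) - 1 < 0" by simp
qed

lemma strict_mono_on_len_D:
  assumes "sqrt (3/2) \<le> \<beta>"
  shows "strict_mono_on {real (2*k) <..< real (2*k+1)} (\<lambda>t. len t \<beta>)"
proof -
  have "1 \<le> sqrt (3/2)" by simp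
  then have "1 \<le> \<beta>" using assms by linarith
  have "3/2 \<le> \<beta>\<^sup>2" using power_mono[OF assms, of 2] by simp
  show ?thesis
  proof (rule strict_mono_onI_deriv_pos[OF conjI[OF len_has_real_derivative_on_D[OF \<open>1 \<le> \<beta>\<close>]]])
    fix t assume "t \<in> {real (2*k) <..< real (2*k+1)}"
    then have "(sigma_hat t \<beta>)\<^sup>2 < 1/2"
      using sigma_hat_square_less_half[OF \<open>1 \<le> \<beta>\<close>, of t] by simp
    then show "0 < sqrt (\<beta>\<^sup>2 - (sigma_hat t \<beta>)\<^sup>2) - 1" using \<open>3/2 \<le> \<beta>\<^sup>2\<close> by simp
  qed
qed

lemma deriv_len_sign_on_D:
  assumes "1 \<le> \<beta>" "0 < t0" "sigma_hat t0 \<beta> = sqrt (\<beta>\<^sup>2 - 1)" "t \<in> I_D"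
  shows "t < t0 \<Longrightarrow> deriv (\<lambda>s. len s \<beta>) t < 0" and "t0 < t \<Longrightarrow> deriv (\<lambda>s. len s \<beta>) t > 0"
proof -
  have "0 \<le> t" and deriv: "deriv (\<lambda>s. len s \<beta>) t = sqrt (\<beta>\<^sup>2 - (sigma_hat t \<beta>)\<^sup>2) - 1"
    using assms(4) len_has_real_derivative_on_D[OF assms(1)] DERIV_imp_deriv
    unfolding I_D_def by fastforce+
  have sq: "(sigma_hat t0 \<beta>)\<^sup>2 = \<beta>\<^sup>2 - 1" using assms(1,3) by simp
  show "deriv (\<lambda>s. len s \<beta>) t < 0" if "t < t0"
  proof -
    have "(sigma_hat t0 \<beta>)\<^sup>2 < (sigma_hat t \<beta>)\<^sup>2"
      using sigma_hat_strict_antimono[OF assms(1) \<open>0 \<le> t\<close> that]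
        sigma_hat(1)[OF assms(1) less_imp_le[OF assms(2)]]
      by (intro power_strict_mono) auto
    then show ?thesis unfolding deriv using sq by simp
  qed
  show "deriv (\<lambda>s. len s \<beta>) t > 0" if "t0 < t"
  proof -
    have "(sigma_hat t \<beta>)\<^sup>2 < (sigma_hat t0 \<beta>)\<^sup>2"
      using sigma_hat_strict_antimono[OF assms(1) less_imp_le[OF assms(2)] that]
        sigma_hat(1)[OF assms(1) \<open>0 \<le> t\<close>]
      by (intro power_strict_mono) auto
    then show ?thesis unfolding deriv using sq by simp
  qed
qed

theorem lemma3p4:
  fixes \<beta> :: real
  assumes "\<beta> > 1"
  shows
   "(\<forall>t\<in>I_L. ((\<lambda>s. len s \<beta>) has_real_derivative
        (sqrt (1 - (sigma_hat t \<beta>)\<^sup>2) - 1)) (at t))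
  \<and> (\<forall>t\<in>I_D. ((\<lambda>s. len s \<beta>) has_real_derivative
        (sqrt (\<beta>\<^sup>2 - (sigma_hat t \<beta>)\<^sup>2) - 1)) (at t))
  \<and> (\<forall>k::nat. strict_convex_on {real (2*k+1) <..< real (2*k+2)} (\<lambda>s. len s \<beta>)
             \<and> strict_convex_on {real (2*k) <..< real (2*k+1)} (\<lambda>s. len s \<beta>))
  \<and> (\<forall>k::nat. strict_antimono_on {real (2*k+1) <..< real (2*k+2)} (\<lambda>s. len s \<beta>))
  \<and> (\<beta> \<ge> sqrt (3/2) \<longrightarrow>
       (\<forall>k::nat. strict_mono_on {real (2*k) <..< real (2*k+1)} (\<lambda>s. len s \<beta>)))
  \<and> (\<beta> < sqrt (3/2) \<longrightarrow>
       (\<exists>!t0. t0 > 0 \<and> sigma_hat t0 \<beta> = sqrt (\<beta>\<^sup>2 - 1))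
     \<and> (\<forall>t0. t0 > 0 \<and> sigma_hat t0 \<beta> = sqrt (\<beta>\<^sup>2 - 1) \<longrightarrow>
           (\<forall>t\<in>I_D. 0 \<le> t \<and> t < t0 \<longrightarrow> deriv (\<lambda>s. len s \<beta>) t < 0)
         \<and> (\<forall>t\<in>I_D. t > t0 \<longrightarrow> deriv (\<lambda>s. len s \<beta>) t > 0)))"
proof -
  have \<beta>: "1 \<le> \<beta>" using assms by simp
  have "\<exists>!t0. t0 > 0 \<and> sigma_hat t0 \<beta> = sqrt (\<beta>\<^sup>2 - 1)" if "\<beta> < sqrt (3/2)"
  proof (rule ex_ex1I)
    have "\<beta>\<^sup>2 < 3/2" using power_strict_mono[OF that, of 2] \<beta> by simp
    then have "sqrt (\<beta>\<^sup>2 - 1) < sqrt (1/2)" by simp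
    moreover have "0 < sqrt (\<beta>\<^sup>2 - 1)" using assms by simp
    ultimately show "\<exists>t0. t0 > 0 \<and> sigma_hat t0 \<beta> = sqrt (\<beta>\<^sup>2 - 1)"
      using sigma_hat_attains[OF \<beta>] by blast
  qed (metis sigma_hat_strict_antimono[OF \<beta>] less_imp_le linorder_neqE_linordered_idom order.irrefl)
  then show ?thesis
    using len_has_real_derivative_on_L[OF \<beta>] len_has_real_derivative_on_D[OF \<beta>]
      strict_convex_on_len_L[OF \<beta>] strict_convex_on_len_D[OF \<beta>]
      strict_antimono_on_len_L[OF \<beta>] strict_mono_on_len_D deriv_len_sign_on_D[OF \<beta>]
    unfolding I_L_def I_D_def by blast
qed

end
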